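(* Let $C=\{c_1,\dots,c_m\}\subset\Delta_d$ be a finite nonempty set and let $v\in\Delta_d$ with $v\in\mathrm{Cone}(C)$. Then $\max_{c\in C}v^\top c\ge\frac1d$.
   Context: $\Delta_d=\{x\in\mathbb{R}^d_{\ge 0}:\sum_i x^i=1\}$; $\mathrm{Cone}(C)$ is the set of nonnegative linear combinations of elements of $C$. *)

theory Defs
  imports "HOL-Analysis.Analysis"
begin

text \<open>The probability prob_simplex in R^d, with d = CARD('n).\<close>
definition prob_simplex :: "(real ^ 'n) set" where
  "prob_simplex = {x. (\<forall>i. 0 \<le> x $ i) \<and> (\<Sum>i\<in>UNIV. x $ i) = 1}"

definition nonneg_cone :: "(real ^ 'n) set \<Rightarrow> (real ^ 'n) set" where
  "nonneg_cone C = {x. \<exists>u. (\<forall>c\<in>C. 0 \<le> u c) \<and> x = (\<Sum>c\<in>C. u c *\<^sub>R c)}"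

end

theory Submission
  imports Defs
begin

text \<open>Writing \<open>\<one>\<close> for the all-ones vector, the hyperplane \<open>x \<bullet> \<one> = 1\<close> contains both \<open>v\<close>
  and \<open>C\<close>, so it slices the cone combination for \<open>v\<close> into a convex one, and \<open>v \<bullet> v\<close> is
  at most the maximum of the linear function \<open>v \<bullet> _\<close> over \<open>C\<close>. On the other hand,
  Cauchy--Schwarz against \<open>\<one>\<close> gives \<open>1 = (v \<bullet> \<one>)\<^sup>2 \<le> d (v \<bullet> v)\<close>.\<close>

lemma prob_simplex_inner_one: "x \<in> prob_simplex \<Longrightarrow> x \<bullet> 1 = 1"
  by (simp add: prob_simplex_def inner_vec_def)

lemma inner_one_one_eq_card: "(1 :: real ^ 'n) \<bullet> 1 = real CARD('n)"
  by (simp add: inner_vec_def)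

lemma inverse_card_le_inner_self:
  fixes v :: "real ^ 'n"
  assumes "v \<bullet> 1 = 1"
  shows "1 / real CARD('n) \<le> v \<bullet> v"
proof -
  have "1 \<le> (v \<bullet> v) * real CARD('n)"
    using Cauchy_Schwarz_ineq [of v 1] assms by (simp add: inner_one_one_eq_card)
  then show ?thesis
    by (simp add: field_simps)
qed

lemma nonneg_cone_inter_hyperplane_subset_convex_hull:
  fixes C :: "(real ^ 'n) set"
  assumes "finite C" and "\<And>c. c \<in> C \<Longrightarrow> c \<bullet> a = 1"
  shows "nonneg_cone C \<inter> {x. x \<bullet> a = 1} \<subseteq> convex hull C"
proof
  fix x
  assume "x \<in> nonneg_cone C \<inter> {x. x \<bullet> a = 1}"
  then obtain u where u_nonneg: "\<forall>c\<in>C. 0 \<le> u c" and x_eq: "x = (\<Sum>c\<in>C. u c *\<^sub>R c)"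
    and "x \<bullet> a = 1"
    unfolding nonneg_cone_def by blast
  have "x \<bullet> a = (\<Sum>c\<in>C. u c * (c \<bullet> a))"
    by (simp add: x_eq inner_sum_left)
  also have "\<dots> = sum u C"
    using assms(2) by simp
  finally have "sum u C = 1"
    using \<open>x \<bullet> a = 1\<close> by simp
  then show "x \<in> convex hull C"
    unfolding convex_hull_finite [OF assms(1)] using u_nonneg x_eq by blast
qed

lemma inner_le_Max_on_convex_hull:
  fixes C :: "'a::real_inner set"
  assumes "finite C" and "x \<in> convex hull C"
  shows "v \<bullet> x \<le> Max ((\<lambda>c. v \<bullet> c) ` C)"
proof -
  let ?M = "Max ((\<lambda>c. v \<bullet> c) ` C)"
  have "convex hull C \<subseteq> {y. v \<bullet> y \<le> ?M}"
    using assms(1) by (intro hull_minimal convex_halfspace_le) auto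
  then show ?thesis
    using assms(2) by blast
qed

theorem lemma1:
  fixes C :: "(real ^ 'n) set" and v :: "real ^ 'n"
  assumes "finite C" and "C \<noteq> {}" and "C \<subseteq> prob_simplex"
    and "v \<in> prob_simplex" and "v \<in> nonneg_cone C"
  shows "Max ((\<lambda>c. v \<bullet> c) ` C) \<ge> 1 / real CARD('n)"
proof -
  have v_one: "v \<bullet> 1 = 1"
    using assms(4) by (rule prob_simplex_inner_one)
  have "v \<in> convex hull C"
    using nonneg_cone_inter_hyperplane_subset_convex_hull [OF assms(1), of 1]
      assms(3,5) v_one prob_simplex_inner_one by blast
  then have "v \<bullet> v \<le> Max ((\<lambda>c. v \<bullet> c) ` C)"
    by (rule inner_le_Max_on_convex_hull [OF assms(1)])
  then show ?thesis
    using inverse_card_le_inner_self [OF v_one] by linarith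
qed

end
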